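(* For every $\delta>0$ and $n\in\mathbb{N}$ there exists $N\in\mathbb{N}$ such that the following holds for every $N$-partitioned hypergraph $H$ and every choice of subsets $W_{jij'kj''}\subseteq V_{ik}$, for all $j,i,j',k,j''\in[N]$ with $j<i<j'<k<j''$, satisfying $|W_{jij'kj''}|\ge\delta|V_{ik}|$: there exist an induced $n$-partitioned subhypergraph $H'$ of $H$ with index set $I\subseteq[N]$ and vertices $w_{ik}\in V_{ik}$, for $i<k$, $i,k\in I$, such that $w_{ik}\in W_{jij'kj''}$ for all $j,j',j''\in I$ with $j<i<j'<k<j''$.
   Context: An $n$-partitioned hypergraph $H$ is a finite $3$-uniform hypergraph whose vertex set is partitioned into nonempty sets $V_{ij}$, $1\le i<j\le n$, such that every edge has, for some $1\le i<j<k\le n$, exactly one vertex in each of $V_{ij}$, $V_{ik}$, $V_{jk}$. For $I\subseteq[n]$, the induced subhypergraph with index set $I$ is the $|I|$-partitioned hypergraph with parts $V_{ij}$, $i<j$, $i,j\in I$ (indexed by elements of $I$) and all edges of $H$ contained in the union of these parts. *)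

theory Defs
  imports Complex_Main
begin

text \<open>An N-partitioned hypergraph: parts V i j (1 <= i < j <= N), edges E (3-element vertex sets).
  Vertices are taken from the fixed type nat (every finite hypergraph is isomorphic to one on nat).\<close>

definition partitioned_hypergraph ::
  "nat \<Rightarrow> (nat \<Rightarrow> nat \<Rightarrow> nat set) \<Rightarrow> nat set set \<Rightarrow> bool" where
  "partitioned_hypergraph N V E \<longleftrightarrow>
     (\<forall>i j. 1 \<le> i \<and> i < j \<and> j \<le> N \<longrightarrow> finite (V i j) \<and> V i j \<noteq> {}) \<and>
     (\<forall>i j i' j'. 1 \<le> i \<and> i < j \<and> j \<le> N \<and> 1 \<le> i' \<and> i' < j' \<and> j' \<le> N
        \<and> (i, j) \<noteq> (i', j') \<longrightarrow> V i j \<inter> V i' j' = {}) \<and>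
     (\<forall>e\<in>E. \<exists>i j k a b c. 1 \<le> i \<and> i < j \<and> j < k \<and> k \<le> N \<and>
        a \<in> V i j \<and> b \<in> V i k \<and> c \<in> V j k \<and> e = {a, b, c})"

definition induced_parts :: "(nat \<Rightarrow> nat \<Rightarrow> nat set) \<Rightarrow> nat set \<Rightarrow> nat set" where
  "induced_parts V I = (\<Union>i\<in>I. \<Union>j\<in>I. if i < j then V i j else {})"

definition induced_edges ::
  "(nat \<Rightarrow> nat \<Rightarrow> nat set) \<Rightarrow> nat set set \<Rightarrow> nat set \<Rightarrow> nat set set" where
  "induced_edges V E I = {e \<in> E. e \<subseteq> induced_parts V I}"

end

theory Submission
  imports Defs "HOL-Library.Ramsey"
begin

(* Colour each n-set S of indices by the set of rank pairs (a, b) for which the a-th and b-th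
   elements i < k of S have a common witness: a w in V i k lying in every W j i j' k j'' with
   j, j', j'' in S. On a large monochromatic set it suffices to realise each pair (a, b) in a
   single n-subset. For that, fix i < k with many indices below, between and above them.
   Averaging over V i k gives a w lying in a delta-fraction of the sets W x i y k z; the
   relation {(x, y, z). w in W x i y k z} is then dense, and two rounds of a Kovari-Sos-Turan
   type argument give blocks A < i < B < k < C of the required sizes with w in every
   W x i y k z for x in A, y in B, z in C. *)

section \<open>Boxes in dense relations\<close>

lemma card_split_at:
  fixes A B :: "'a::linorder set"
  assumes "finite A" "finite B" "\<forall>y\<in>A. y < x" "\<forall>y\<in>B. x < y"
  shows "card (A \<union> {x} \<union> B) = card A + 1 + card B"
proof -
  have "card (A \<union> {x} \<union> B) = card (A \<union> {x}) + card B"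
    using assms by (intro card_Un_disjoint) fastforce+
  moreover have "card (A \<union> {x}) = card A + 1"
    using assms by (subst card_Un_disjoint) auto
  ultimately show ?thesis
    by simp
qed

lemma card_large_values_ge:
  fixes f :: "'a \<Rightarrow> real"
  assumes "finite R" "0 \<le> M" "\<forall>s\<in>R. 0 \<le> f s \<and> f s \<le> M" "\<delta> * M * card R \<le> (\<Sum>s\<in>R. f s)"
    and "0 \<le> \<delta>" "\<delta> \<le> 1"
  shows "\<delta> / 2 * card R \<le> card {s\<in>R. \<delta> * M / 2 \<le> f s}"
proof (cases "M = 0")
  case True
  then have "{s\<in>R. \<delta> * M / 2 \<le> f s} = R"
    using assms(3) by auto
  moreover have "\<delta> / 2 * card R \<le> 1 * real (card R)"
    using assms(5,6) by (intro mult_right_mono) auto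
  ultimately show ?thesis
    by simp
next
  case False
  define R1 where "R1 = {s\<in>R. \<delta> * M / 2 \<le> f s}"
  have M: "0 < M"
    using False assms(2) by simp
  have "R1 \<subseteq> R"
    unfolding R1_def by auto
  then have "(\<Sum>s\<in>R. f s) = (\<Sum>s\<in>R1. f s) + (\<Sum>s\<in>R - R1. f s)"
    using sum.subset_diff assms(1) by (metis add.commute)
  also have "(\<Sum>s\<in>R1. f s) \<le> (\<Sum>s\<in>R1. M)"
    using \<open>R1 \<subseteq> R\<close> assms(3) by (intro sum_mono) auto
  also have "(\<Sum>s\<in>R - R1. f s) \<le> (\<Sum>s\<in>R - R1. \<delta> * M / 2)"
    by (intro sum_mono) (auto simp: R1_def)
  also have "\<dots> \<le> (\<Sum>s\<in>R. \<delta> * M / 2)"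
    using assms(1,5) M by (intro sum_mono2) simp_all
  finally have "\<delta> / 2 * card R * M \<le> card R1 * M"
    using assms(4) by (simp add: algebra_simps)
  then show ?thesis
    using M unfolding R1_def by simp
qed

lemma card_eq_sum_card_fibres:
  assumes "finite X" "finite R" "T \<subseteq> X \<times> R"
  shows "card T = (\<Sum>s\<in>R. card {x\<in>X. (x, s) \<in> T})"
proof -
  have "T\<inverse> = Sigma R (\<lambda>s. {x\<in>X. (x, s) \<in> T})"
    using assms(3) by auto
  then have "card T = card (Sigma R (\<lambda>s. {x\<in>X. (x, s) \<in> T}))"
    by (metis card_inverse)
  also have "\<dots> = (\<Sum>s\<in>R. card {x\<in>X. (x, s) \<in> T})"
    using assms(1,2) by (intro card_SigmaI) auto
  finally show ?thesis .
qed

lemma dense_relation_contains_box: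
  fixes T :: "('a \<times> 'b) set" and \<delta> :: real
  assumes finX: "finite X" and finR: "finite R" and TXR: "T \<subseteq> X \<times> R"
    and dense: "\<delta> * card X * card R \<le> card T" and \<delta>: "0 < \<delta>" "\<delta> \<le> 1"
    and p: "2 * p \<le> \<delta> * card X"
  shows "\<exists>A\<subseteq>X. card A = p \<and> (\<exists>R'\<subseteq>R. \<delta> / 2 ^ (card X + 1) * card R \<le> card R' \<and> A \<times> R' \<subseteq> T)"
proof -
  (* Half of the density sits on columns s whose fibre has at least half the average size;
     among these, some fibre F is shared by a 2^-|X| fraction. *)
  define fibre where "fibre s = {x\<in>X. (x, s) \<in> T}" for s
  define heavy where "heavy = {F\<in>Pow X. \<delta> * card X / 2 \<le> card F}"
  define R1 where "R1 = {s\<in>R. fibre s \<in> heavy}"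
  have "\<delta> / 2 * card R \<le> card {s\<in>R. \<delta> * card X / 2 \<le> real (card (fibre s))}"
  proof (intro card_large_values_ge)
    show "\<delta> * card X * card R \<le> (\<Sum>s\<in>R. real (card (fibre s)))"
      using dense card_eq_sum_card_fibres[OF finX finR TXR] unfolding fibre_def by simp
    show "\<forall>s\<in>R. 0 \<le> real (card (fibre s)) \<and> real (card (fibre s)) \<le> card X"
      unfolding fibre_def using finX by (simp add: card_mono)
  qed (use finR \<delta> in auto)
  also have "{s\<in>R. \<delta> * card X / 2 \<le> real (card (fibre s))} = R1"
    unfolding R1_def heavy_def fibre_def by auto
  finally have R1: "\<delta> / 2 * card R \<le> card R1" .
  have "\<delta> * card X \<le> 1 * real (card X)"
    using \<delta> by (intro mult_right_mono) auto
  then have "X \<in> heavy"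
    unfolding heavy_def by simp
  moreover have "fibre \<in> R1 \<rightarrow> heavy" "finite R1" "finite heavy"
    unfolding R1_def heavy_def using finR finX by auto
  ultimately obtain F where F: "F \<in> heavy"
    and "card R1 \<le> card (fibre -` {F} \<inter> R1) * card heavy"
    using pigeonhole_card by (metis empty_iff)
  define R' where "R' = fibre -` {F} \<inter> R1"
  have "card heavy \<le> card (Pow X)"
    unfolding heavy_def using finX by (intro card_mono) auto
  then have "card R1 \<le> card R' * 2 ^ card X"
    using \<open>card R1 \<le> card (fibre -` {F} \<inter> R1) * card heavy\<close> finX
    unfolding R'_def by (metis card_Pow le_trans mult_le_mono2)
  then have "\<delta> / 2 * card R \<le> card R' * 2 ^ card X"
    using R1 by (metis of_nat_le_iff order_trans)
  then have R': "\<delta> / 2 ^ (card X + 1) * card R \<le> card R'"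
    by (simp add: pos_divide_le_eq)
  have "p \<le> card F"
    using F p unfolding heavy_def by simp
  then obtain A where "A \<subseteq> F" "card A = p"
    by (meson obtain_subset_with_card_n)
  moreover have "A \<times> R' \<subseteq> T"
    using \<open>A \<subseteq> F\<close> unfolding R'_def fibre_def by auto
  moreover have "F \<subseteq> X" "R' \<subseteq> R"
    using F unfolding heavy_def R'_def R1_def by auto
  ultimately show ?thesis
    using R' by blast
qed

lemma dense_ternary_relation_contains_box:
  fixes T :: "('a \<times> 'b \<times> 'c) set" and \<delta> :: real
  assumes fin: "finite X" "finite Y" "finite Z" and T: "T \<subseteq> X \<times> Y \<times> Z"
    and dense: "\<delta> * card X * card Y * card Z \<le> card T" and \<delta>: "0 < \<delta>" "\<delta> \<le> 1"
    and p: "2 * p \<le> \<delta> * card X"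
    and q: "2 * q \<le> \<delta> / 2 ^ (card X + 1) * card Y"
    and r: "r \<le> \<delta> / 2 ^ (card X + 1) / 2 ^ (card Y + 1) * card Z"
  shows "\<exists>A\<subseteq>X. \<exists>B\<subseteq>Y. \<exists>C\<subseteq>Z. card A = p \<and> card B = q \<and> card C = r \<and> A \<times> B \<times> C \<subseteq> T"
proof -
  define \<delta>' where "\<delta>' = \<delta> / 2 ^ (card X + 1)"
  obtain A R' where A: "A \<subseteq> X" "card A = p" and R': "R' \<subseteq> Y \<times> Z"
      "\<delta>' * card Y * card Z \<le> card R'" "A \<times> R' \<subseteq> T"
    using dense_relation_contains_box[of X "Y \<times> Z" T \<delta> p] fin T dense \<delta> p
    by (auto simp: \<delta>'_def card_cartesian_product mult.assoc)
  have "\<delta>' \<le> \<delta>"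
    unfolding \<delta>'_def using \<delta> by (simp add: divide_le_eq) (metis one_le_power one_le_numeral power_Suc)
  moreover have "0 < \<delta>'"
    unfolding \<delta>'_def using \<delta> by simp
  ultimately have \<delta>': "0 < \<delta>'" "\<delta>' \<le> 1"
    using \<delta> by linarith+
  obtain B Z' where B: "B \<subseteq> Y" "card B = q" and Z': "Z' \<subseteq> Z"
      "\<delta>' / 2 ^ (card Y + 1) * card Z \<le> card Z'" "B \<times> Z' \<subseteq> R'"
    using dense_relation_contains_box[OF fin(2,3) R'(1,2) \<delta>' q[folded \<delta>'_def]] by blast
  obtain C where C: "C \<subseteq> Z'" "card C = r"
    using Z'(2) r[folded \<delta>'_def] by (metis obtain_subset_with_card_n of_nat_le_iff order_trans)
  have "B \<times> C \<subseteq> R'"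
    using Z'(3) C(1) by (meson Sigma_mono order_refl order_trans)
  then have "A \<times> B \<times> C \<subseteq> T"
    using R'(3) by (meson Sigma_mono order_refl order_trans)
  moreover have "C \<subseteq> Z"
    using C(1) Z'(1) by blast
  ultimately show ?thesis
    using A B C(2) by blast
qed

lemma ex_point_in_many_sets:
  fixes g :: "'a \<Rightarrow> 'b set" and \<delta> :: real
  assumes "finite V" "V \<noteq> {}" "finite U" "\<forall>t\<in>U. g t \<subseteq> V \<and> \<delta> * card V \<le> card (g t)"
  shows "\<exists>v\<in>V. \<delta> * card U \<le> card {t\<in>U. v \<in> g t}"
proof (rule ccontr)
  have "(\<Sum>t\<in>U. card (g t)) = card (Sigma U g)"
    using assms(1,3,4) by (intro card_SigmaI[symmetric]) (auto intro: finite_subset)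
  also have "\<dots> = (\<Sum>v\<in>V. card {t\<in>U. (t, v) \<in> Sigma U g})"
    using assms(1,3,4) by (intro card_eq_sum_card_fibres) auto
  also have "\<dots> = (\<Sum>v\<in>V. card {t\<in>U. v \<in> g t})"
    by simp
  finally have double_count: "(\<Sum>t\<in>U. real (card (g t))) = (\<Sum>v\<in>V. real (card {t\<in>U. v \<in> g t}))"
    by (simp only: of_nat_sum[symmetric])
  assume "\<not> ?thesis"
  then have "(\<Sum>v\<in>V. real (card {t\<in>U. v \<in> g t})) < (\<Sum>v\<in>V. \<delta> * card U)"
    using assms(1,2) by (intro sum_strict_mono) auto
  also have "\<dots> = (\<Sum>t\<in>U. \<delta> * card V)"
    by simp
  also have "\<dots> \<le> (\<Sum>t\<in>U. real (card (g t)))"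
    using assms(4) by (intro sum_mono) auto
  finally show False
    using double_count by simp
qed

lemma ex_point_in_dense_box:
  fixes f :: "'a \<Rightarrow> 'b \<Rightarrow> 'c \<Rightarrow> 'd set" and \<delta> :: real
  assumes fin: "finite V" "V \<noteq> {}" "finite X" "finite Y" "finite Z"
    and dense: "\<forall>x\<in>X. \<forall>y\<in>Y. \<forall>z\<in>Z. f x y z \<subseteq> V \<and> \<delta> * card V \<le> card (f x y z)"
    and \<delta>: "0 < \<delta>" "\<delta> \<le> 1"
    and p: "2 * p \<le> \<delta> * card X"
    and q: "2 * q \<le> \<delta> / 2 ^ (card X + 1) * card Y"
    and r: "r \<le> \<delta> / 2 ^ (card X + 1) / 2 ^ (card Y + 1) * card Z"
  shows "\<exists>w\<in>V. \<exists>A\<subseteq>X. \<exists>B\<subseteq>Y. \<exists>C\<subseteq>Z. card A = p \<and> card B = q \<and> card C = r \<and>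
           (\<forall>x\<in>A. \<forall>y\<in>B. \<forall>z\<in>C. w \<in> f x y z)"
proof -
  define g where "g t = f (fst t) (fst (snd t)) (snd (snd t))" for t
  have "\<forall>t\<in>X \<times> Y \<times> Z. g t \<subseteq> V \<and> \<delta> * card V \<le> card (g t)"
    using dense unfolding g_def by auto
  then obtain w where "w \<in> V" and "\<delta> * card (X \<times> Y \<times> Z) \<le> card {t\<in>X \<times> Y \<times> Z. w \<in> g t}"
    using ex_point_in_many_sets[of V "X \<times> Y \<times> Z" g \<delta>] fin by blast
  define T where "T = {t\<in>X \<times> Y \<times> Z. w \<in> g t}"
  have "\<delta> * card X * card Y * card Z \<le> card T"
    using \<open>\<delta> * card (X \<times> Y \<times> Z) \<le> card {t\<in>X \<times> Y \<times> Z. w \<in> g t}\<close>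
    unfolding T_def by (simp add: card_cartesian_product mult.assoc)
  moreover have "T \<subseteq> X \<times> Y \<times> Z"
    unfolding T_def by blast
  ultimately have "\<exists>A\<subseteq>X. \<exists>B\<subseteq>Y. \<exists>C\<subseteq>Z. card A = p \<and> card B = q \<and> card C = r \<and> A \<times> B \<times> C \<subseteq> T"
    by (intro dense_ternary_relation_contains_box[OF fin(3-5) _ _ \<delta> p q r])
  then obtain A B C where ABC: "A \<subseteq> X" "B \<subseteq> Y" "C \<subseteq> Z" "card A = p" "card B = q" "card C = r"
    and box: "A \<times> B \<times> C \<subseteq> T"
    by blast
  have "w \<in> f x y z" if "x \<in> A" "y \<in> B" "z \<in> C" for x y z
  proof -
    have "(x, y, z) \<in> T"
      using box that by blast
    then show ?thesis
      unfolding T_def g_def by simp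
  qed
  then show ?thesis
    using \<open>w \<in> V\<close> ABC by blast
qed

section \<open>Ranks and Ramsey's theorem\<close>

definition rank :: "nat set \<Rightarrow> nat \<Rightarrow> nat" where
  "rank S x = card {y\<in>S. y < x}"

lemma rank_less_rank: "finite S \<Longrightarrow> x \<in> S \<Longrightarrow> x < z \<Longrightarrow> rank S x < rank S z"
  unfolding rank_def by (rule psubset_card_mono) auto

lemma rank_less_card: "finite S \<Longrightarrow> x \<in> S \<Longrightarrow> rank S x < card S"
  unfolding rank_def by (rule psubset_card_mono) auto

lemma inj_on_rank: "finite S \<Longrightarrow> inj_on (rank S) S"
  by (metis linorder_inj_onI' rank_less_rank less_irrefl)

lemma rank_image: "finite S \<Longrightarrow> rank S ` S = {..<card S}"
  by (intro card_subset_eq) (auto simp: rank_less_card card_image inj_on_rank)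

lemma card_between:
  assumes "finite S" "x \<in> S" "x < z"
  shows "card {y\<in>S. x < y \<and> y < z} = rank S z - rank S x - 1"
proof -
  have "{y\<in>S. y < z} = {y\<in>S. y < x} \<union> {x} \<union> {y\<in>S. x < y \<and> y < z}"
    using assms by auto
  also have "card \<dots> = rank S x + 1 + card {y\<in>S. x < y \<and> y < z}"
    unfolding rank_def using assms(1) by (intro card_split_at) auto
  finally show ?thesis
    unfolding rank_def by simp
qed

lemma card_above:
  assumes "finite S" "x \<in> S"
  shows "card {y\<in>S. x < y} = card S - rank S x - 1"
proof -
  have "S = {y\<in>S. y < x} \<union> {x} \<union> {y\<in>S. x < y}"
    using assms by auto
  also have "card \<dots> = rank S x + 1 + card {y\<in>S. x < y}"
    unfolding rank_def using assms(1) by (intro card_split_at) auto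
  finally show ?thesis
    by simp
qed

lemma ex_rank_eq:
  assumes "finite S" "a < card S"
  shows "\<exists>x\<in>S. rank S x = a"
  using rank_image[OF assms(1)] assms(2) by (metis imageE lessThan_iff)

lemma partn_lst_finite_resource:
  assumes N: "partn_lst {..<N} \<alpha> r" and Y: "finite Y" "N \<le> card Y"
  shows "partn_lst Y \<alpha> r"
  unfolding partn_lst_def
proof
  fix f assume f: "f \<in> nsets Y r \<rightarrow> {..<length \<alpha>}"
  obtain Y0 where "Y0 \<subseteq> Y" "card Y0 = N"
    using Y(2) obtain_subset_with_card_n by metis
  then obtain e where e: "bij_betw e {..<N} Y0"
    using ex_bij_betw_nat_finite[of Y0] Y(1) finite_subset by (metis atLeast0LessThan)
  then have "e \<in> {..<N} \<rightarrow> Y" "inj_on e {..<N}"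
    using \<open>Y0 \<subseteq> Y\<close> by (auto simp: bij_betw_def)
  then have "f \<circ> (\<lambda>X. e ` X) \<in> nsets {..<N} r \<rightarrow> {..<length \<alpha>}"
    using f by (rule nsets_compose_image_funcset[rotated])
  then obtain i H0 where i: "i < length \<alpha>" and H0: "H0 \<in> nsets {..<N} (\<alpha> ! i)"
    and hom: "(f \<circ> (\<lambda>X. e ` X)) ` nsets H0 r \<subseteq> {i}"
    using partn_lstE[OF N] by blast
  have inj: "inj_on e H0"
    using \<open>inj_on e {..<N}\<close> H0 by (auto simp: nsets_def intro: inj_on_subset)
  then have "e ` H0 \<in> nsets Y (\<alpha> ! i)"
    using H0 \<open>e \<in> {..<N} \<rightarrow> Y\<close> by (auto simp: nsets_def card_image)
  moreover have "f ` nsets (e ` H0) r \<subseteq> {i}"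
    using hom by (auto elim!: nset_image_obtains[OF _ inj])
  ultimately show "\<exists>i<length \<alpha>. monochromatic Y (\<alpha> ! i) r f i"
    unfolding monochromatic_def using i by blast
qed

lemma ramsey_finite_colours:
  fixes C :: "'c set"
  assumes "finite C" "C \<noteq> {}"
  shows "\<exists>N. \<forall>(Y :: 'a set) f. finite Y \<longrightarrow> N \<le> card Y \<longrightarrow> f \<in> nsets Y r \<rightarrow> C \<longrightarrow>
           (\<exists>H\<in>nsets Y K. \<exists>c. \<forall>S\<in>nsets H r. f S = c)"
proof -
  obtain enc where enc: "bij_betw enc C {..<card C}"
    using ex_bij_betw_finite_nat[OF assms(1)] by (metis atLeast0LessThan)
  obtain N :: nat where N: "partn_lst {..<N} (replicate (card C) K) r"
    using ramsey_full by blast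
  have "\<exists>H\<in>nsets Y K. \<exists>c. \<forall>S\<in>nsets H r. f S = c"
    if Y: "finite Y" "N \<le> card Y" and f: "f \<in> nsets Y r \<rightarrow> C" for Y :: "'a set" and f
  proof -
    have "enc \<circ> f \<in> nsets Y r \<rightarrow> {..<card C}"
      using f bij_betw_imp_funcset[OF enc] by (auto simp: Pi_iff)
    then obtain i H where i: "i < card C" and H: "H \<in> nsets Y K"
      and hom: "(enc \<circ> f) ` nsets H r \<subseteq> {i}"
      using partn_lstE[OF partn_lst_finite_resource[OF N Y]] by (metis length_replicate nth_replicate)
    have "f S = inv_into C enc i" if "S \<in> nsets H r" for S
    proof -
      have "f S \<in> C"
        using f H that nsets_mono[of H Y r] by (auto simp: nsets_def)
      then show ?thesis
        using hom that enc by (metis bij_betw_def comp_apply image_subset_iff inv_into_f_f singletonD)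
    qed
    then show ?thesis
      using H by blast
  qed
  then show ?thesis
    by blast
qed

definition rank_pairs :: "(nat set \<Rightarrow> nat \<Rightarrow> nat \<Rightarrow> bool) \<Rightarrow> nat set \<Rightarrow> (nat \<times> nat) set" where
  "rank_pairs G S = {(rank S i, rank S k) | i k. i \<in> S \<and> k \<in> S \<and> i < k \<and> G S i k}"

lemma rank_pairs_subset: "finite S \<Longrightarrow> rank_pairs G S \<subseteq> {(a, b). a < b \<and> b < card S}"
  unfolding rank_pairs_def using rank_less_rank rank_less_card by fastforce

lemma rank_pairsD:
  assumes "finite S" "i \<in> S" "k \<in> S" "(rank S i, rank S k) \<in> rank_pairs G S"
  shows "G S i k"
  using assms inj_on_rank[OF assms(1)] unfolding rank_pairs_def by (auto dest: inj_onD)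

lemma ex_subset_all_rank_pairs:
  assumes "finite H" "n \<le> card H"
    and hom: "\<forall>S\<in>nsets H n. rank_pairs G S = c"
    and realised: "\<And>a b. a < b \<Longrightarrow> b < n \<Longrightarrow> \<exists>S\<subseteq>H. card S = n \<and> (a, b) \<in> rank_pairs G S"
  shows "\<exists>I\<subseteq>H. card I = n \<and> (\<forall>i\<in>I. \<forall>k\<in>I. i < k \<longrightarrow> G I i k)"
proof -
  obtain I where I: "I \<subseteq> H" "card I = n"
    using assms(2) obtain_subset_with_card_n by metis
  have "finite I"
    using I(1) assms(1) finite_subset by blast
  have "G I i k" if "i \<in> I" "k \<in> I" "i < k" for i k
  proof -
    have "rank I i < rank I k" "rank I k < n"
      using rank_less_rank[OF \<open>finite I\<close> that(1,3)] rank_less_card[OF \<open>finite I\<close> that(2)] I(2)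
      by simp_all
    then obtain S where "S \<subseteq> H" "card S = n" "(rank I i, rank I k) \<in> rank_pairs G S"
      using realised by blast
    moreover have "S \<in> nsets H n" "I \<in> nsets H n"
      using \<open>S \<subseteq> H\<close> \<open>card S = n\<close> I assms(1) by (auto simp: nsets_def intro: finite_subset)
    ultimately have "(rank I i, rank I k) \<in> rank_pairs G I"
      using hom by metis
    then show ?thesis
      by (rule rank_pairsD[OF \<open>finite I\<close> that(1,2)])
  qed
  then show ?thesis
    using I by blast
qed

lemma ramsey_all_ranks:
  fixes ok :: "'x \<Rightarrow> nat set \<Rightarrow> bool" and G :: "'x \<Rightarrow> nat set \<Rightarrow> nat \<Rightarrow> nat \<Rightarrow> bool"
  assumes hereditary: "\<And>x Y Y'. ok x Y \<Longrightarrow> Y' \<subseteq> Y \<Longrightarrow> ok x Y'"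
    and at_ranks: "\<And>a b. a < b \<Longrightarrow> b < n \<Longrightarrow> \<exists>M. \<forall>x Y. finite Y \<and> ok x Y \<and> M \<le> card Y \<longrightarrow>
           (\<exists>S\<subseteq>Y. card S = n \<and> (a, b) \<in> rank_pairs (G x) S)"
  shows "\<exists>N. \<forall>x Y. finite Y \<and> ok x Y \<and> N \<le> card Y \<longrightarrow>
           (\<exists>I\<subseteq>Y. card I = n \<and> (\<forall>i\<in>I. \<forall>k\<in>I. i < k \<longrightarrow> G x I i k))"
proof -
  define P where "P = {(a, b). a < b \<and> b < n}"
  have "finite P"
    unfolding P_def by (rule finite_subset[of _ "{..<n} \<times> {..<n}"]) auto
  have "\<forall>ab\<in>P. \<exists>m. \<forall>x Y. finite Y \<and> ok x Y \<and> m \<le> card Y \<longrightarrow>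
           (\<exists>S\<subseteq>Y. card S = n \<and> ab \<in> rank_pairs (G x) S)"
    unfolding P_def using at_ranks by (simp add: case_prod_beta)
  from bchoice[OF this] obtain M where M: "\<forall>ab\<in>P. \<forall>x Y. finite Y \<and> ok x Y \<and> M ab \<le> card Y \<longrightarrow>
           (\<exists>S\<subseteq>Y. card S = n \<and> ab \<in> rank_pairs (G x) S)" ..
  define K where "K = n + (\<Sum>ab\<in>P. M ab)"
  obtain N where N: "\<forall>(Y :: nat set) f. finite Y \<longrightarrow> N \<le> card Y \<longrightarrow> f \<in> nsets Y n \<rightarrow> Pow P \<longrightarrow>
           (\<exists>H\<in>nsets Y K. \<exists>c. \<forall>S\<in>nsets H n. f S = c)"
    using ramsey_finite_colours[of "Pow P" n K] \<open>finite P\<close> by blast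
  have "\<exists>I\<subseteq>Y. card I = n \<and> (\<forall>i\<in>I. \<forall>k\<in>I. i < k \<longrightarrow> G x I i k)"
    if Y: "finite Y" "ok x Y" "N \<le> card Y" for x Y
  proof -
    have "rank_pairs (G x) \<in> nsets Y n \<rightarrow> Pow P"
      using rank_pairs_subset unfolding P_def nsets_def by fastforce
    then have "\<exists>H\<in>nsets Y K. \<exists>c. \<forall>S\<in>nsets H n. rank_pairs (G x) S = c"
      by (rule N[rule_format, OF Y(1,3)])
    then obtain H c where H: "H \<subseteq> Y" "finite H" "card H = K"
      and hom: "\<forall>S\<in>nsets H n. rank_pairs (G x) S = c"
      by (auto simp: nsets_def)
    have "\<exists>S\<subseteq>H. card S = n \<and> (a, b) \<in> rank_pairs (G x) S" if "a < b" "b < n" for a b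
    proof -
      have "(a, b) \<in> P"
        unfolding P_def using that by simp
      then have "M (a, b) \<le> card H"
        using \<open>finite P\<close> H(3) unfolding K_def by (simp add: member_le_sum trans_le_add2)
      then show ?thesis
        using M \<open>(a, b) \<in> P\<close> H(2) hereditary[OF Y(2) H(1)] by blast
    qed
    then obtain I where "I \<subseteq> H" "card I = n" "\<forall>i\<in>I. \<forall>k\<in>I. i < k \<longrightarrow> G x I i k"
      using ex_subset_all_rank_pairs[OF H(2) _ hom] H(3) unfolding K_def by (metis le_add1)
    then show ?thesis
      using H(1) by blast
  qed
  then show ?thesis
    by blast
qed

section \<open>Common witnesses\<close>

definition dense_on ::
  "real \<Rightarrow> (nat \<Rightarrow> nat \<Rightarrow> nat set) \<Rightarrow> (nat \<Rightarrow> nat \<Rightarrow> nat \<Rightarrow> nat \<Rightarrow> nat \<Rightarrow> nat set) \<Rightarrow> nat set \<Rightarrow> bool"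
  where "dense_on \<delta> V W Y \<longleftrightarrow>
    (\<forall>i\<in>Y. \<forall>k\<in>Y. i < k \<longrightarrow> finite (V i k) \<and> V i k \<noteq> {}) \<and>
    (\<forall>j\<in>Y. \<forall>i\<in>Y. \<forall>j'\<in>Y. \<forall>k\<in>Y. \<forall>j''\<in>Y. j < i \<and> i < j' \<and> j' < k \<and> k < j'' \<longrightarrow>
       W j i j' k j'' \<subseteq> V i k \<and> \<delta> * card (V i k) \<le> card (W j i j' k j''))"

definition common_witness ::
  "(nat \<Rightarrow> nat \<Rightarrow> nat set) \<Rightarrow> (nat \<Rightarrow> nat \<Rightarrow> nat \<Rightarrow> nat \<Rightarrow> nat \<Rightarrow> nat set) \<Rightarrow> nat set \<Rightarrow> nat \<Rightarrow> nat \<Rightarrow> bool"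
  where "common_witness V W S i k \<longleftrightarrow>
    (\<exists>w\<in>V i k. \<forall>j\<in>S. \<forall>j'\<in>S. \<forall>j''\<in>S. j < i \<and> i < j' \<and> j' < k \<and> k < j'' \<longrightarrow> w \<in> W j i j' k j'')"

lemma dense_onD:
  assumes "dense_on \<delta> V W Y"
  shows "\<And>i k. i \<in> Y \<Longrightarrow> k \<in> Y \<Longrightarrow> i < k \<Longrightarrow> finite (V i k) \<and> V i k \<noteq> {}"
    and "\<And>j i j' k j''. j \<in> Y \<Longrightarrow> i \<in> Y \<Longrightarrow> j' \<in> Y \<Longrightarrow> k \<in> Y \<Longrightarrow> j'' \<in> Y \<Longrightarrow>
      j < i \<Longrightarrow> i < j' \<Longrightarrow> j' < k \<Longrightarrow> k < j'' \<Longrightarrow>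
      W j i j' k j'' \<subseteq> V i k \<and> \<delta> * card (V i k) \<le> card (W j i j' k j'')"
  using assms unfolding dense_on_def by simp_all

lemma dense_on_subset:
  assumes "dense_on \<delta> V W Y" "Y' \<subseteq> Y"
  shows "dense_on \<delta> V W Y'"
proof -
  have "x \<in> Y" if "x \<in> Y'" for x
    using assms(2) that by blast
  then show ?thesis
    using assms(1) unfolding dense_on_def by simp
qed

lemma common_witness_of_box:
  assumes fin: "finite A" "finite B" "finite C" and "i < k"
    and order: "\<forall>x\<in>A. x < i" "\<forall>y\<in>B. i < y \<and> y < k" "\<forall>z\<in>C. k < z"
    and w: "w \<in> V i k" "\<forall>x\<in>A. \<forall>y\<in>B. \<forall>z\<in>C. w \<in> W x i y k z"
  defines "S \<equiv> A \<union> {i} \<union> B \<union> {k} \<union> C"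
  shows "rank S i = card A" "rank S k = card A + 1 + card B"
    and "card S = card A + 1 + card B + 1 + card C" "common_witness V W S i k"
proof -
  have below_i: "{y\<in>S. y < i} = A"
    using order \<open>i < k\<close> unfolding S_def by auto
  have below_k: "{y\<in>S. y < k} = A \<union> {i} \<union> B"
    using order \<open>i < k\<close> unfolding S_def by auto
  have card_below_k: "card (A \<union> {i} \<union> B) = card A + 1 + card B"
    using fin order by (intro card_split_at) auto
  show "rank S i = card A" "rank S k = card A + 1 + card B"
    unfolding rank_def below_i below_k card_below_k by simp_all
  have "card S = card (A \<union> {i} \<union> B) + 1 + card C"
    unfolding S_def using fin order \<open>i < k\<close> by (intro card_split_at) auto
  then show "card S = card A + 1 + card B + 1 + card C"
    using card_below_k by simp
  have between: "{y\<in>S. i < y \<and> y < k} = B" and above_k: "{y\<in>S. k < y} = C"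
    using order \<open>i < k\<close> unfolding S_def by auto
  show "common_witness V W S i k"
    unfolding common_witness_def using w below_i between above_k by blast
qed

lemma ex_subset_common_witness:
  fixes \<delta> :: real
  assumes Y: "finite Y" "dense_on \<delta> V W Y" and ik: "i \<in> Y" "k \<in> Y" "i < k"
    and \<delta>: "0 < \<delta>" "\<delta> \<le> 1"
  defines "X \<equiv> {y\<in>Y. y < i}" and "M \<equiv> {y\<in>Y. i < y \<and> y < k}" and "Z \<equiv> {y\<in>Y. k < y}"
  assumes p: "2 * p \<le> \<delta> * card X"
    and q: "2 * q \<le> \<delta> / 2 ^ (card X + 1) * card M"
    and r: "r \<le> \<delta> / 2 ^ (card X + 1) / 2 ^ (card M + 1) * card Z"
  shows "\<exists>S\<subseteq>Y. i \<in> S \<and> k \<in> S \<and> card S = p + 1 + q + 1 + r \<and> rank S i = p \<and>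
           rank S k = p + 1 + q \<and> common_witness V W S i k"
proof -
  have fin: "finite X" "finite M" "finite Z"
    using Y(1) unfolding X_def M_def Z_def by simp_all
  have dense: "\<forall>x\<in>X. \<forall>y\<in>M. \<forall>z\<in>Z. W x i y k z \<subseteq> V i k \<and> \<delta> * card (V i k) \<le> card (W x i y k z)"
    using dense_onD(2)[OF Y(2) _ ik(1) _ ik(2)] unfolding X_def M_def Z_def by auto
  have "\<exists>w\<in>V i k. \<exists>A\<subseteq>X. \<exists>B\<subseteq>M. \<exists>C\<subseteq>Z. card A = p \<and> card B = q \<and> card C = r \<and>
           (\<forall>x\<in>A. \<forall>y\<in>B. \<forall>z\<in>C. w \<in> W x i y k z)"
    using dense_onD(1)[OF Y(2) ik]
    by (intro ex_point_in_dense_box[where f = "\<lambda>x y z. W x i y k z", OF _ _ fin dense \<delta> p q r]) simp_all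
  then obtain w A B C where w: "w \<in> V i k" and ABC: "A \<subseteq> X" "B \<subseteq> M" "C \<subseteq> Z"
      "card A = p" "card B = q" "card C = r"
    and witness: "\<forall>x\<in>A. \<forall>y\<in>B. \<forall>z\<in>C. w \<in> W x i y k z"
    by blast
  have fin_ABC: "finite A" "finite B" "finite C"
    using ABC(1-3) fin finite_subset by blast+
  have order: "\<forall>x\<in>A. x < i" "\<forall>y\<in>B. i < y \<and> y < k" "\<forall>z\<in>C. k < z"
    using ABC(1-3) unfolding X_def M_def Z_def by auto
  have "rank (A \<union> {i} \<union> B \<union> {k} \<union> C) i = card A"
    "rank (A \<union> {i} \<union> B \<union> {k} \<union> C) k = card A + 1 + card B"
    "card (A \<union> {i} \<union> B \<union> {k} \<union> C) = card A + 1 + card B + 1 + card C"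
    "common_witness V W (A \<union> {i} \<union> B \<union> {k} \<union> C) i k"
    using common_witness_of_box[where V = V and W = W, OF fin_ABC ik(3) order w witness] by simp_all
  moreover have "A \<union> {i} \<union> B \<union> {k} \<union> C \<subseteq> Y"
    using ABC(1-3) ik(1,2) unfolding X_def M_def Z_def by auto
  ultimately show ?thesis
    using ABC(4-6) by (metis Un_iff insertI1)
qed

lemma le_mult_nat_ceiling_divide:
  fixes c d :: real
  assumes "0 < d"
  shows "c \<le> d * nat \<lceil>c / d\<rceil>"
proof -
  have "c / d \<le> nat \<lceil>c / d\<rceil>"
    by (rule real_nat_ceiling_ge)
  then show ?thesis
    using assms by (simp add: pos_divide_le_eq mult.commute)
qed

lemma ex_subset_common_witness_at_ranks:
  fixes \<delta> :: real
  assumes \<delta>: "0 < \<delta>" "\<delta> \<le> 1" and ab: "a < b" "b < n"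
  shows "\<exists>M. \<forall>V W Y. finite Y \<and> dense_on \<delta> V W Y \<and> M \<le> card Y \<longrightarrow>
           (\<exists>S\<subseteq>Y. card S = n \<and> (a, b) \<in> rank_pairs (common_witness V W) S)"
proof -
  (* The bound on the middle block deteriorates with the size of the lower block, so i and k
     are chosen with exactly m1 indices below i and exactly m2 between i and k. *)
  define q r where "q = b - a - 1" and "r = n - 1 - b"
  define m1 where "m1 = nat \<lceil>2 * a / \<delta>\<rceil>"
  define \<delta>1 where "\<delta>1 = \<delta> / 2 ^ (m1 + 1)"
  define m2 where "m2 = nat \<lceil>2 * q / \<delta>1\<rceil>"
  define \<delta>2 where "\<delta>2 = \<delta>1 / 2 ^ (m2 + 1)"
  define m3 where "m3 = nat \<lceil>r / \<delta>2\<rceil>"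
  have "0 < \<delta>1" "0 < \<delta>2"
    unfolding \<delta>1_def \<delta>2_def using \<delta> by simp_all
  then have m: "2 * a \<le> \<delta> * m1" "2 * q \<le> \<delta>1 * m2" "r \<le> \<delta>2 * m3"
    unfolding m1_def m2_def m3_def using \<delta>(1) by (meson le_mult_nat_ceiling_divide)+
  have "\<exists>S\<subseteq>Y. card S = n \<and> (a, b) \<in> rank_pairs (common_witness V W) S"
    if Y: "finite Y" "dense_on \<delta> V W Y" "m1 + 1 + m2 + 1 + m3 \<le> card Y" for V W Y
  proof -
    obtain i where i: "i \<in> Y" "rank Y i = m1"
      using ex_rank_eq[OF Y(1), of m1] Y(3) by auto
    obtain k where k: "k \<in> Y" "rank Y k = m1 + 1 + m2"
      using ex_rank_eq[OF Y(1), of "m1 + 1 + m2"] Y(3) by auto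
    have "\<not> k < i" "k \<noteq> i"
      using rank_less_rank[OF Y(1) k(1), of i] i k by auto
    then have "i < k"
      by simp
    have "card {y\<in>Y. y < i} = m1"
      using i(2) unfolding rank_def .
    moreover have "card {y\<in>Y. i < y \<and> y < k} = m2"
      using card_between[OF Y(1) i(1) \<open>i < k\<close>] i k by simp
    moreover have "\<delta>2 * m3 \<le> \<delta>2 * card {y\<in>Y. k < y}"
      using card_above[OF Y(1) k(1)] k Y(3) \<open>0 < \<delta>2\<close> by (intro mult_left_mono) auto
    ultimately obtain S where "S \<subseteq> Y" "i \<in> S" "k \<in> S" "card S = a + 1 + q + 1 + r"
      "rank S i = a" "rank S k = a + 1 + q" "common_witness V W S i k"
      using ex_subset_common_witness[OF Y(1,2) i(1) k(1) \<open>i < k\<close> \<delta>, of a q r] m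
      unfolding \<delta>1_def \<delta>2_def by auto
    moreover have "a + 1 + q + 1 + r = n" "a + 1 + q = b"
      unfolding q_def r_def using ab by simp_all
    ultimately show ?thesis
      using \<open>i < k\<close> unfolding rank_pairs_def by auto
  qed
  then show ?thesis
    by blast
qed

lemma ex_subset_all_common_witnesses:
  fixes \<delta> :: real
  assumes "0 < \<delta>" "\<delta> \<le> 1"
  shows "\<exists>N. \<forall>V W Y. finite Y \<and> dense_on \<delta> V W Y \<and> N \<le> card Y \<longrightarrow>
           (\<exists>I\<subseteq>Y. card I = n \<and> (\<forall>i\<in>I. \<forall>k\<in>I. i < k \<longrightarrow> common_witness V W I i k))"
proof -
  have "\<exists>N. \<forall>x Y. finite Y \<and> dense_on \<delta> (fst x) (snd x) Y \<and> N \<le> card Y \<longrightarrow>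
           (\<exists>I\<subseteq>Y. card I = n \<and> (\<forall>i\<in>I. \<forall>k\<in>I. i < k \<longrightarrow> common_witness (fst x) (snd x) I i k))"
  proof (rule ramsey_all_ranks)
    show "dense_on \<delta> (fst x) (snd x) Y'" if "dense_on \<delta> (fst x) (snd x) Y" "Y' \<subseteq> Y" for x Y Y'
      using dense_on_subset that .
    show "\<exists>M. \<forall>x Y. finite Y \<and> dense_on \<delta> (fst x) (snd x) Y \<and> M \<le> card Y \<longrightarrow>
           (\<exists>S\<subseteq>Y. card S = n \<and> (a, b) \<in> rank_pairs (common_witness (fst x) (snd x)) S)"
      if "a < b" "b < n" for a b
      using ex_subset_common_witness_at_ranks[OF assms that] by simp
  qed
  then show ?thesis
    by simp
qed

lemma dense_on_mono: "dense_on \<delta> V W Y \<Longrightarrow> \<delta>' \<le> \<delta> \<Longrightarrow> dense_on \<delta>' V W Y"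
  unfolding dense_on_def by (meson mult_right_mono of_nat_0_le_iff order_trans)

lemma dense_on_partitioned_hypergraph:
  fixes \<delta> :: real
  assumes H: "partitioned_hypergraph N V E"
    and W: "\<forall>j i j' k j''. 1 \<le> j \<and> j < i \<and> i < j' \<and> j' < k \<and> k < j'' \<and> j'' \<le> N \<longrightarrow>
           W j i j' k j'' \<subseteq> V i k \<and> \<delta> * card (V i k) \<le> card (W j i j' k j'')"
  shows "dense_on \<delta> V W {1..N}"
  unfolding dense_on_def
proof (intro conjI ballI impI)
  fix i k assume "i \<in> {1..N}" "k \<in> {1..N}" "i < k"
  then show "finite (V i k)" "V i k \<noteq> {}"
    using H unfolding partitioned_hypergraph_def by simp_all
next
  fix j i j' k j'' assume "j \<in> {1..N}" "i \<in> {1..N}" "j' \<in> {1..N}" "k \<in> {1..N}" "j'' \<in> {1..N}"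
    and "j < i \<and> i < j' \<and> j' < k \<and> k < j''"
  then show "W j i j' k j'' \<subseteq> V i k" "\<delta> * card (V i k) \<le> card (W j i j' k j'')"
    using W by simp_all
qed

lemma ex_common_witness_function:
  assumes "\<forall>i\<in>I. \<forall>k\<in>I. i < k \<longrightarrow> common_witness V W I i k"
  shows "\<exists>w. (\<forall>i\<in>I. \<forall>k\<in>I. i < k \<longrightarrow> w i k \<in> V i k) \<and>
    (\<forall>j\<in>I. \<forall>i\<in>I. \<forall>j'\<in>I. \<forall>k\<in>I. \<forall>j''\<in>I. j < i \<and> i < j' \<and> j' < k \<and> k < j'' \<longrightarrow> w i k \<in> W j i j' k j'')"
proof -
  obtain w where w: "\<And>i k. i \<in> I \<Longrightarrow> k \<in> I \<Longrightarrow> i < k \<Longrightarrow> w i k \<in> V i k \<and>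
      (\<forall>j\<in>I. \<forall>j'\<in>I. \<forall>j''\<in>I. j < i \<and> i < j' \<and> j' < k \<and> k < j'' \<longrightarrow> w i k \<in> W j i j' k j'')"
    using assms unfolding common_witness_def by metis
  have "w i k \<in> W j i j' k j''"
    if "j \<in> I" "i \<in> I" "j' \<in> I" "k \<in> I" "j'' \<in> I" "j < i \<and> i < j' \<and> j' < k \<and> k < j''" for j i j' k j''
    using w[of i k] that by auto
  then show ?thesis
    using w by blast
qed

theorem lemma4p2:
  fixes \<delta> :: real and n :: nat
  assumes "\<delta> > 0"
  shows "\<exists>N::nat. \<forall>V E (W :: nat \<Rightarrow> nat \<Rightarrow> nat \<Rightarrow> nat \<Rightarrow> nat \<Rightarrow> nat set).
     partitioned_hypergraph N V E \<longrightarrow>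
     (\<forall>j i j' k j''. 1 \<le> j \<and> j < i \<and> i < j' \<and> j' < k \<and> k < j'' \<and> j'' \<le> N \<longrightarrow>
        W j i j' k j'' \<subseteq> V i k \<and> real (card (W j i j' k j'')) \<ge> \<delta> * real (card (V i k))) \<longrightarrow>
     (\<exists>I w. I \<subseteq> {1..N} \<and> card I = n \<and>
        (\<forall>i\<in>I. \<forall>k\<in>I. i < k \<longrightarrow> w i k \<in> V i k) \<and>
        (\<forall>j\<in>I. \<forall>i\<in>I. \<forall>j'\<in>I. \<forall>k\<in>I. \<forall>j''\<in>I.
           j < i \<and> i < j' \<and> j' < k \<and> k < j'' \<longrightarrow> w i k \<in> W j i j' k j''))"
proof -
  have \<delta>': "0 < min \<delta> 1" "min \<delta> 1 \<le> 1" "min \<delta> 1 \<le> \<delta>"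
    using assms by auto
  obtain N where N: "\<forall>V W Y. finite Y \<and> dense_on (min \<delta> 1) V W Y \<and> N \<le> card Y \<longrightarrow>
      (\<exists>I\<subseteq>Y. card I = n \<and> (\<forall>i\<in>I. \<forall>k\<in>I. i < k \<longrightarrow> common_witness V W I i k))"
    using ex_subset_all_common_witnesses[OF \<delta>'(1,2)] by blast
  show ?thesis
  proof (intro exI[of _ N] allI impI, goal_cases)
    case (1 V E W)
    then have "dense_on \<delta> V W {1..N}"
      by (intro dense_on_partitioned_hypergraph)
    then have "dense_on (min \<delta> 1) V W {1..N}"
      using \<delta>'(3) by (rule dense_on_mono)
    then obtain I where I: "I \<subseteq> {1..N}" "card I = n"
      and witnesses: "\<forall>i\<in>I. \<forall>k\<in>I. i < k \<longrightarrow> common_witness V W I i k"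
      using N[rule_format, of "{1..N}" V W] by auto
    obtain w where "\<forall>i\<in>I. \<forall>k\<in>I. i < k \<longrightarrow> w i k \<in> V i k"
      "\<forall>j\<in>I. \<forall>i\<in>I. \<forall>j'\<in>I. \<forall>k\<in>I. \<forall>j''\<in>I. j < i \<and> i < j' \<and> j' < k \<and> k < j'' \<longrightarrow>
         w i k \<in> W j i j' k j''"
      using ex_common_witness_function[OF witnesses] by blast
    with I show ?case
      by (intro exI conjI)
  qed
qed

end
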